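(* Let $P,Q$ be probability measures on $(\Omega,\mathcal{M})$ and $\alpha\in\mathbb{R}\setminus\{0,1\}$. Then $$R_\alpha(Q\|P)=\sup_{g\in B(\Omega)}\Big\{\frac{1}{\alpha-1}\log\Big[\int e^{(\alpha-1)g}\,dQ\Big]-\frac1\alpha\log\Big[\int e^{\alpha g}\,dP\Big]\Big\},$$ where $B(\Omega)$ is the set of bounded measurable real-valued functions on $\Omega$.
   Context: Rényi divergence: let $\nu$ be a $\sigma$-finite positive measure with $dP=p\,d\nu$, $dQ=q\,d\nu$. For $\alpha\in(0,1)$, $R_\alpha(Q\|P)=\frac{1}{\alpha(\alpha-1)}\log\int_{p>0}q^\alpha p^{1-\alpha}\,d\nu$; for $\alpha>1$, the same formula if $Q\ll P$ and $R_\alpha(Q\|P)=+\infty$ if $Q\not\ll P$; for $\alpha<0$, $R_\alpha(Q\|P)=R_{1-\alpha}(P\|Q)$. *)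

theory Defs
  imports "HOL-Probability.Probability"
begin

definition ennreal_ln :: "ennreal \<Rightarrow> ereal" where
  "ennreal_ln x = (if x = 0 then -\<infinity> else if x = \<infinity> then \<infinity> else ereal (ln (enn2real x)))"

definition renyi_integral :: "'a measure \<Rightarrow> ('a \<Rightarrow> real) \<Rightarrow> ('a \<Rightarrow> real) \<Rightarrow> real \<Rightarrow> ennreal" where
  "renyi_integral \<nu> p q a =
     (\<integral>\<^sup>+ x. indicator {y. p y > 0} x * ennreal (q x powr a * p x powr (1 - a)) \<partial>\<nu>)"

text \<open>Renyi divergence R_a(Q||P) for a > 0, a \<noteq> 1, where dP = p d nu, dQ = q d nu.\<close>
definition renyi_pos :: "'a measure \<Rightarrow> ('a \<Rightarrow> real) \<Rightarrow> ('a \<Rightarrow> real) \<Rightarrow> real \<Rightarrow> ereal" where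
  "renyi_pos \<nu> p q a =
     (if a > 1 \<and> \<not> absolutely_continuous (density \<nu> p) (density \<nu> q) then \<infinity>
      else ereal (1 / (a * (a - 1))) * ennreal_ln (renyi_integral \<nu> p q a))"

definition renyi_div :: "'a measure \<Rightarrow> ('a \<Rightarrow> real) \<Rightarrow> ('a \<Rightarrow> real) \<Rightarrow> real \<Rightarrow> ereal" where
  "renyi_div \<nu> p q a = (if a < 0 then renyi_pos \<nu> q p (1 - a) else renyi_pos \<nu> p q a)"

definition bounded_measurable :: "'a measure \<Rightarrow> ('a \<Rightarrow> real) set" where
  "bounded_measurable M = {g \<in> borel_measurable M. \<exists>B. \<forall>x\<in>space M. \<bar>g x\<bar> \<le> B}"

end

theory Submission
  imports Defs
begin

text \<open>
  With \<open>A = \<integral> exp ((\<alpha> - 1) g) dQ\<close> and \<open>B = \<integral> exp (\<alpha> g) dP\<close> the objective is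
  \<open>ln (A powr \<alpha> * B powr (1 - \<alpha>)) / (\<alpha> (\<alpha> - 1))\<close>. For \<open>0 < \<alpha> < 1\<close>, writing
  \<open>q powr \<alpha> * p powr (1 - \<alpha>) = (exp ((\<alpha> - 1) g) q) powr \<alpha> * (exp (\<alpha> g) p) powr (1 - \<alpha>)\<close>,
  Hoelder's inequality bounds the Renyi integral by \<open>A powr \<alpha> * B powr (1 - \<alpha>)\<close>; for
  \<open>\<alpha> > 1\<close> and \<open>Q \<lless> P\<close>, Hoelder applied to the factorisation of \<open>exp ((\<alpha> - 1) g) q\<close>
  through the Renyi integrand gives the reverse bound. Either way the objective is at most
  the divergence. The supremum is approached by \<open>g = ln r\<close> for bounded versions \<open>r\<close> of the
  likelihood ratio \<open>q / p\<close>: clamped to \<open>[1/N, N]\<close> when \<open>\<alpha> < 1\<close>, and truncated at \<open>N\<close> and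
  floored at a small \<open>\<delta>\<close> when \<open>\<alpha> > 1\<close>, where monotone convergence controls the truncation.
  If \<open>\<alpha> > 1\<close> and \<open>Q\<close> is not absolutely continuous with respect to \<open>P\<close>, a large multiple
  of the indicator of a \<open>P\<close>-null set charged by \<open>Q\<close> makes the objective unbounded. Negative
  \<open>\<alpha>\<close> reduces to \<open>1 - \<alpha>\<close> by exchanging \<open>P\<close> and \<open>Q\<close> and replacing \<open>g\<close> by \<open>-g\<close>.
\<close>

lemma powr_max_le_add:
  fixes s d a :: real
  assumes "0 \<le> s" "0 \<le> d" "0 < a"
  shows "max s d powr a \<le> s powr a + d powr a"
  using assms by (cases "s \<le> d") (auto simp: max_def)

lemma Youngs_inequality_nonneg:
  fixes x y a :: real
  assumes "0 < a" "a < 1" "0 \<le> x" "0 \<le> y"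
  shows "x powr a * y powr (1 - a) \<le> a * x + (1 - a) * y"
  using assms Youngs_inequality_0[of a "1 - a" x y]
  by (cases "x = 0 \<or> y = 0") auto

lemma nn_integral_Hoelder:
  fixes M :: "'a measure" and f h :: "'a \<Rightarrow> real"
  assumes a: "0 < a" "a < 1"
    and [measurable]: "f \<in> borel_measurable M" "h \<in> borel_measurable M"
    and f0: "\<And>x. x \<in> space M \<Longrightarrow> 0 \<le> f x" and h0: "\<And>x. x \<in> space M \<Longrightarrow> 0 \<le> h x"
    and F: "(\<integral>\<^sup>+x. ennreal (f x) \<partial>M) = ennreal F" "0 \<le> F"
    and H: "(\<integral>\<^sup>+x. ennreal (h x) \<partial>M) = ennreal H" "0 \<le> H"
  shows "(\<integral>\<^sup>+x. ennreal (f x powr a * h x powr (1 - a)) \<partial>M) \<le> ennreal (F powr a * H powr (1 - a))"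
proof (cases "F = 0 \<or> H = 0")
  case True
  then have "(AE x in M. ennreal (f x) = 0) \<or> (AE x in M. ennreal (h x) = 0)"
    using F H by (auto simp: nn_integral_0_iff_AE[symmetric])
  then have "AE x in M. ennreal (f x powr a * h x powr (1 - a)) = 0"
    by (elim disjE AE_mp) (auto intro!: AE_I2 dest: f0 h0 simp: ennreal_eq_0_iff)
  then show ?thesis
    by (subst nn_integral_0_iff_AE[THEN iffD2]) auto
next
  case False
  with F H have FH: "0 < F" "0 < H" by auto
  define C where "C = F powr a * H powr (1 - a)"
  \<comment> \<open>Young's inequality applied to \<open>f/F\<close> and \<open>h/H\<close>, which both integrate to 1\<close>
  have Young: "f x powr a * h x powr (1 - a) \<le> (C * a / F) * f x + (C * (1 - a) / H) * h x"
    if x: "x \<in> space M" for x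
  proof -
    have "(f x / F) powr a * (h x / H) powr (1 - a) \<le> a * (f x / F) + (1 - a) * (h x / H)"
      using a f0[OF x] h0[OF x] FH by (intro Youngs_inequality_nonneg) auto
    then have "C * ((f x / F) powr a * (h x / H) powr (1 - a)) \<le> C * (a * (f x / F) + (1 - a) * (h x / H))"
      by (rule mult_left_mono) (simp add: C_def)
    then show ?thesis
      using f0[OF x] h0[OF x] FH by (simp add: C_def powr_divide field_simps)
  qed
  have "(\<integral>\<^sup>+x. ennreal (f x powr a * h x powr (1 - a)) \<partial>M)
      \<le> (\<integral>\<^sup>+x. ennreal (C * a / F) * ennreal (f x) + ennreal (C * (1 - a) / H) * ennreal (h x) \<partial>M)"
    using Young f0 h0 a FH
    by (intro nn_integral_mono)
       (auto simp: C_def ennreal_mult[symmetric] ennreal_plus[symmetric] intro!: ennreal_leI simp del: ennreal_plus)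
  also have "\<dots> = ennreal (C * a / F) * ennreal F + ennreal (C * (1 - a) / H) * ennreal H"
    by (simp add: nn_integral_add nn_integral_cmult F H)
  also have "\<dots> = ennreal C"
    using a FH by (simp add: C_def ennreal_mult[symmetric] ennreal_plus[symmetric] field_simps del: ennreal_plus)
  finally show ?thesis by (simp add: C_def)
qed

lemma powr_mult_le_if_le_root_mult:
  fixes A B r \<alpha> :: real
  assumes "1 < \<alpha>" "0 < A" "0 < B" "0 \<le> r" "A \<le> r powr (1 / \<alpha>) * B powr (1 - 1 / \<alpha>)"
  shows "A powr \<alpha> * B powr (1 - \<alpha>) \<le> r"
proof -
  have "A powr \<alpha> \<le> (r powr (1 / \<alpha>) * B powr (1 - 1 / \<alpha>)) powr \<alpha>"
    using assms by (intro powr_mono2) auto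
  also have "\<dots> = r * B powr (\<alpha> - 1)"
  proof -
    have "1 / \<alpha> * \<alpha> = 1" "(1 - 1 / \<alpha>) * \<alpha> = \<alpha> - 1"
      using assms(1) by (simp_all add: field_simps)
    then show ?thesis
      using assms(3,4) by (simp add: powr_mult powr_powr)
  qed
  finally have "A powr \<alpha> * B powr (1 - \<alpha>) \<le> r * B powr (\<alpha> - 1) * B powr (1 - \<alpha>)"
    by (rule mult_right_mono) simp
  also have "\<dots> = r"
    using assms(3) by (simp add: powr_add[symmetric])
  finally show ?thesis .
qed

lemma ereal_le_ennreal_ln_iff_pos:
  assumes "0 < c"
  shows "ereal y \<le> ereal (1 / c) * ennreal_ln I \<longleftrightarrow> ennreal (exp (c * y)) \<le> I"
    and "ereal y < ereal (1 / c) * ennreal_ln I \<longleftrightarrow> ennreal (exp (c * y)) < I"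
proof -
  have "y \<le> ln r / c \<longleftrightarrow> exp (c * y) \<le> r" "y < ln r / c \<longleftrightarrow> exp (c * y) < r" if "0 < r" for r
    using assms that exp_le_cancel_iff[of "c * y" "ln r"] exp_less_cancel_iff[of "c * y" "ln r"]
    by (simp_all add: pos_le_divide_eq pos_less_divide_eq mult.commute)
  then show "ereal y \<le> ereal (1 / c) * ennreal_ln I \<longleftrightarrow> ennreal (exp (c * y)) \<le> I"
    and "ereal y < ereal (1 / c) * ennreal_ln I \<longleftrightarrow> ennreal (exp (c * y)) < I"
    using assms by (cases I; auto simp: ennreal_ln_def ennreal_le_iff ennreal_less_iff)+
qed

lemma ereal_le_ennreal_ln_iff_neg:
  assumes "c < 0"
  shows "ereal y \<le> ereal (1 / c) * ennreal_ln I \<longleftrightarrow> I \<le> ennreal (exp (c * y))"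
    and "ereal y < ereal (1 / c) * ennreal_ln I \<longleftrightarrow> I < ennreal (exp (c * y))"
proof -
  have r: "y \<le> ln r / c \<longleftrightarrow> r \<le> exp (c * y)" "y < ln r / c \<longleftrightarrow> r < exp (c * y)" if "0 < r" for r
    using assms that exp_le_cancel_iff[of "ln r" "c * y"] exp_less_cancel_iff[of "ln r" "c * y"]
    by (simp_all add: neg_le_divide_eq neg_less_divide_eq mult.commute)
  have c: "1 / c < 0" using assms by simp
  consider "I = 0" | r where "I = ennreal r" "0 < r" | "I = \<top>"
    by (metis ennreal_cases ennreal_zero_less_top not_gr_zero ennreal_less_zero_iff)
  then have "(ereal y \<le> ereal (1 / c) * ennreal_ln I \<longleftrightarrow> I \<le> ennreal (exp (c * y))) \<and>
    (ereal y < ereal (1 / c) * ennreal_ln I \<longleftrightarrow> I < ennreal (exp (c * y)))"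
    by cases (use c r in \<open>simp_all add: ennreal_ln_def ennreal_less_iff top_unique\<close>)
  then show "ereal y \<le> ereal (1 / c) * ennreal_ln I \<longleftrightarrow> I \<le> ennreal (exp (c * y))"
    and "ereal y < ereal (1 / c) * ennreal_ln I \<longleftrightarrow> I < ennreal (exp (c * y))"
    by auto
qed

lemma ereal_le_SUP_approx:
  assumes "\<And>y. ereal y < R \<Longrightarrow> \<exists>g\<in>G. y \<le> f g"
  shows "R \<le> (SUP g\<in>G. ereal (f g))"
proof (rule dense_le)
  fix z assume "z < R"
  then show "z \<le> (SUP g\<in>G. ereal (f g))"
  proof (cases z)
    case (real y)
    with assms \<open>z < R\<close> obtain g where "g \<in> G" "y \<le> f g" by auto
    then show ?thesis
      using real by (auto intro: SUP_upper2)
  qed auto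
qed

lemma bounded_measurable_density [simp]: "bounded_measurable (density M d) = bounded_measurable M"
  unfolding bounded_measurable_def by simp

lemma bounded_measurable_cmult:
  "g \<in> bounded_measurable M \<Longrightarrow> (\<lambda>x. c * g x) \<in> bounded_measurable M"
  unfolding bounded_measurable_def
  by (auto simp: abs_mult intro!: exI[where x="\<bar>c\<bar> * _"] mult_left_mono)

lemma bounded_measurable_uminus_image: "(\<lambda>g x. - g x) ` bounded_measurable M = bounded_measurable M"
proof -
  have "(\<lambda>x. - g x) \<in> bounded_measurable M" if "g \<in> bounded_measurable M" for g
    using that unfolding bounded_measurable_def by auto
  then show ?thesis
    by (auto intro!: image_eqI[where x="\<lambda>x. - _ x"])
qed

lemma bounded_measurable_ln:
  assumes [measurable]: "t \<in> borel_measurable M" and "0 < a" and "\<And>x. x \<in> space M \<Longrightarrow> a \<le> t x \<and> t x \<le> b"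
  shows "(\<lambda>x. ln (t x)) \<in> bounded_measurable M"
proof -
  have "\<bar>ln (t x)\<bar> \<le> \<bar>ln a\<bar> + \<bar>ln b\<bar>" if "x \<in> space M" for x
    using assms(2) assms(3)[OF that] by (smt (verit) ln_le_cancel_iff)
  then show ?thesis
    unfolding bounded_measurable_def by auto
qed

section \<open>Likelihood ratios\<close>

definition renyi_integrand :: "real \<Rightarrow> real \<Rightarrow> real \<Rightarrow> real" where
  "renyi_integrand \<alpha> p q = (if 0 < p then q powr \<alpha> * p powr (1 - \<alpha>) else 0)"

lemma renyi_integrand_eq_0 [simp]: "\<not> 0 < p \<Longrightarrow> renyi_integrand \<alpha> p q = 0"
  by (simp add: renyi_integrand_def)

lemma renyi_integrand_nonneg: "0 \<le> renyi_integrand \<alpha> p q"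
  by (simp add: renyi_integrand_def)

lemma measurable_renyi_integrand [measurable]:
  assumes [measurable]: "f \<in> borel_measurable M" "h \<in> borel_measurable M"
  shows "(\<lambda>x. renyi_integrand \<alpha> (f x) (h x)) \<in> borel_measurable M"
  unfolding renyi_integrand_def by measurable

lemma renyi_integral_eq_nn_integral:
  "renyi_integral \<nu> p q \<alpha> = (\<integral>\<^sup>+x. ennreal (renyi_integrand \<alpha> (p x) (q x)) \<partial>\<nu>)"
  unfolding renyi_integral_def renyi_integrand_def by (rule nn_integral_cong) (simp add: indicator_def)

lemma renyi_integrand_eq_ratio_powr:
  fixes p q \<alpha> :: real
  assumes "0 < p" "0 \<le> q"
  shows "renyi_integrand \<alpha> p q = (q / p) powr \<alpha> * p"
    and "0 < q \<Longrightarrow> renyi_integrand \<alpha> p q = (q / p) powr (\<alpha> - 1) * q"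
  using assms by (simp_all add: renyi_integrand_def powr_divide powr_diff field_simps)

lemma tilted_powr_product:
  fixes p q t a :: real
  assumes "0 \<le> p" "0 \<le> q"
  shows "(exp ((a - 1) * t) * q) powr a * (exp (a * t) * p) powr (1 - a) = q powr a * p powr (1 - a)"
proof -
  have "(exp ((a - 1) * t) * q) powr a * (exp (a * t) * p) powr (1 - a)
      = exp ((a - 1) * t * a + a * t * (1 - a)) * (q powr a * p powr (1 - a))"
    using assms by (simp add: powr_mult exp_powr_real exp_add)
  also have "(a - 1) * t * a + a * t * (1 - a) = 0"
    by (simp add: algebra_simps)
  finally show ?thesis by simp
qed

lemma renyi_integrand_powr_tilted:
  fixes p q t a :: real
  assumes "0 < p" "0 \<le> q" "a \<noteq> 0"
  shows "renyi_integrand a p q powr (1 / a) * (exp (a * t) * p) powr (1 - 1 / a) = exp ((a - 1) * t) * q"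
proof -
  have "renyi_integrand a p q powr (1 / a) * (exp (a * t) * p) powr (1 - 1 / a)
      = q * (p powr ((1 - a) / a) * p powr (1 - 1 / a)) * exp (a * t * (1 - 1 / a))"
    using assms by (simp add: renyi_integrand_def powr_mult powr_powr exp_powr_real)
  also have "p powr ((1 - a) / a) * p powr (1 - 1 / a) = 1"
    using assms by (simp add: powr_add[symmetric] field_simps)
  also have "a * t * (1 - 1 / a) = (a - 1) * t"
    using assms by (simp add: field_simps)
  finally show ?thesis by simp
qed

text \<open>The \<open>max 0\<close> makes the truncations nonnegative, hence increasing in \<open>N\<close>, at every point.\<close>

definition truncated_ratio :: "real \<Rightarrow> real \<Rightarrow> real \<Rightarrow> real" where
  "truncated_ratio N p q = (if 0 < p then min (max 0 (q / p)) N else 0)"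

lemma truncated_ratio_bounds: "0 \<le> N \<Longrightarrow> 0 \<le> truncated_ratio N p q \<and> truncated_ratio N p q \<le> N"
  by (simp add: truncated_ratio_def)

lemma truncated_ratio_powr_mult_le:
  assumes "1 < \<alpha>" "0 \<le> q" "0 \<le> N" "truncated_ratio N p q \<le> t"
  shows "truncated_ratio N p q powr \<alpha> * p \<le> t powr (\<alpha> - 1) * q"
proof (cases "0 < p")
  case True
  define s where "s = truncated_ratio N p q"
  have s: "0 \<le> s" "s * p \<le> q"
    using True assms(2,3) by (auto simp: s_def truncated_ratio_def min_def max_def pos_divide_le_eq)
  have "s powr \<alpha> * p = s powr (\<alpha> - 1) * (s * p)"
    using s(1) powr_mult_base[of s "\<alpha> - 1"] by (simp add: mult_ac)
  also have "\<dots> \<le> s powr (\<alpha> - 1) * q"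
    using s by (intro mult_left_mono) auto
  also have "\<dots> \<le> t powr (\<alpha> - 1) * q"
    using s assms by (intro mult_right_mono powr_mono2) (auto simp: s_def)
  finally show ?thesis
    by (simp add: s_def)
next
  case False
  then show ?thesis
    using assms(2) by (simp add: truncated_ratio_def)
qed

lemma SUP_truncated_ratio_powr:
  assumes "0 < \<alpha>" "0 \<le> p" "0 \<le> q"
  shows "(SUP n. ennreal (truncated_ratio (real n) p q powr \<alpha> * p)) = ennreal (renyi_integrand \<alpha> p q)"
proof (rule antisym)
  have "truncated_ratio (real n) p q powr \<alpha> * p \<le> renyi_integrand \<alpha> p q" for n
  proof (cases "0 < p")
    case True
    then have "min (q / p) (real n) powr \<alpha> * p \<le> (q / p) powr \<alpha> * p"
      using assms by (intro mult_right_mono powr_mono2) auto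
    then show ?thesis
      using True assms by (simp add: truncated_ratio_def renyi_integrand_eq_ratio_powr)
  qed (simp add: truncated_ratio_def)
  then show "(SUP n. ennreal (truncated_ratio (real n) p q powr \<alpha> * p)) \<le> ennreal (renyi_integrand \<alpha> p q)"
    by (intro SUP_least ennreal_leI)
  have "truncated_ratio (real (nat \<lceil>q / p\<rceil>)) p q powr \<alpha> * p = renyi_integrand \<alpha> p q"
  proof (cases "0 < p")
    case True
    then have "min (max 0 (q / p)) (real (nat \<lceil>q / p\<rceil>)) = q / p"
      using real_nat_ceiling_ge[of "q / p"] assms by simp
    then show ?thesis
      using True assms by (simp add: truncated_ratio_def renyi_integrand_eq_ratio_powr)
  qed (simp add: truncated_ratio_def)
  then show "ennreal (renyi_integrand \<alpha> p q) \<le> (SUP n. ennreal (truncated_ratio (real n) p q powr \<alpha> * p))"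
    by (intro SUP_upper2[of "nat \<lceil>q / p\<rceil>"]) auto
qed

lemma incseq_truncated_ratio_powr:
  assumes "0 < \<alpha>"
  shows "incseq (\<lambda>n. truncated_ratio (real n) p q powr \<alpha> * p)"
proof (rule incseq_SucI)
  fix n
  have "min (max 0 (q / p)) (real n) powr \<alpha> * p \<le> min (max 0 (q / p)) (real (Suc n)) powr \<alpha> * p" if "0 < p"
    using that assms by (intro mult_right_mono powr_mono2) auto
  then show "truncated_ratio (real n) p q powr \<alpha> * p \<le> truncated_ratio (real (Suc n)) p q powr \<alpha> * p"
    by (simp add: truncated_ratio_def)
qed

lemma exists_pos_powr_product_gt:
  fixes J E \<alpha> :: real
  assumes "0 < J" "E < J"
  shows "\<exists>e>0. E < J powr \<alpha> * (J + e) powr (1 - \<alpha>)"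
proof -
  have "((\<lambda>e. J powr \<alpha> * (J + e) powr (1 - \<alpha>)) \<longlongrightarrow> J powr \<alpha> * (J + 0) powr (1 - \<alpha>)) (at_right 0)"
    using assms(1) by (intro tendsto_intros) auto
  moreover have "J powr \<alpha> * (J + 0) powr (1 - \<alpha>) = J"
    using assms(1) by (simp add: powr_add[symmetric])
  ultimately have "eventually (\<lambda>e. E < J powr \<alpha> * (J + e) powr (1 - \<alpha>)) (at_right 0)"
    using assms(2) by (auto intro: order_tendstoD)
  then have "eventually (\<lambda>e. E < J powr \<alpha> * (J + e) powr (1 - \<alpha>) \<and> 0 < e) (at_right 0)"
    using eventually_at_right_less[of "0::real"] by eventually_elim auto
  then show ?thesis
    using eventually_happens'[OF trivial_limit_at_right_real] by blast
qed

text \<open>Where \<open>p = 0\<close> the clamped ratio takes its largest value \<open>N\<close>, so that \<open>r powr (\<alpha> - 1)\<close> is small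
  on the part of \<open>Q\<close> that is singular with respect to \<open>P\<close>.\<close>

definition clamped_ratio :: "real \<Rightarrow> real \<Rightarrow> real \<Rightarrow> real" where
  "clamped_ratio N p q = (if 0 < p then max (min (q / p) N) (1 / N) else N)"

lemma clamped_ratio_bounds:
  assumes "1 \<le> N"
  shows "1 / N \<le> clamped_ratio N p q" "clamped_ratio N p q \<le> N"
proof -
  have "1 / N \<le> N"
    using assms by (smt (verit) divide_le_eq_1_pos)
  then show "1 / N \<le> clamped_ratio N p q" "clamped_ratio N p q \<le> N"
    by (auto simp: clamped_ratio_def)
qed

lemma exists_large_powr_lt:
  fixes r E \<alpha> :: real
  assumes "0 < \<alpha>" "\<alpha> < 1" "r < E"
  shows "\<exists>N\<ge>1. r + N powr (\<alpha> - 1) < E \<and> r + N powr (- \<alpha>) < E"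
proof -
  have "((\<lambda>N. N powr (\<alpha> - 1)) \<longlongrightarrow> 0) at_top" "((\<lambda>N. N powr (- \<alpha>)) \<longlongrightarrow> 0) at_top"
    using assms(1,2) by (auto intro!: tendsto_neg_powr filterlim_ident)
  then have "((\<lambda>N. r + N powr (\<alpha> - 1)) \<longlongrightarrow> r) at_top" "((\<lambda>N. r + N powr (- \<alpha>)) \<longlongrightarrow> r) at_top"
    using tendsto_add[OF tendsto_const, of _ 0 at_top r] by auto
  then have "eventually (\<lambda>N. r + N powr (\<alpha> - 1) < E \<and> r + N powr (- \<alpha>) < E \<and> 1 \<le> N) at_top"
    using assms(3) by (auto intro!: eventually_conj order_tendstoD eventually_ge_at_top)
  then show ?thesis
    by (auto simp: eventually_at_top_linorder)
qed

lemma clamped_ratio_powr_mult_q: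
  assumes "0 < \<alpha>" "\<alpha> < 1" "0 \<le> p" "0 \<le> q" "1 \<le> N"
  shows "clamped_ratio N p q powr (\<alpha> - 1) * q \<le> renyi_integrand \<alpha> p q + N powr (\<alpha> - 1) * q"
proof (cases "0 < p \<and> 0 < q")
  case True
  define r where "r = q / p"
  have r: "0 < r" using True by (simp add: r_def)
  have "clamped_ratio N p q powr (\<alpha> - 1) * q \<le> min r N powr (\<alpha> - 1) * q"
    using True r assms by (intro mult_right_mono powr_mono2') (auto simp: clamped_ratio_def r_def)
  also have "\<dots> \<le> renyi_integrand \<alpha> p q + N powr (\<alpha> - 1) * q"
    using True renyi_integrand_eq_ratio_powr(2)[of p q \<alpha>] renyi_integrand_nonneg[of \<alpha> p q]
    by (cases "r \<le> N") (simp_all add: min_def r_def)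
  finally show ?thesis .
qed (use assms renyi_integrand_nonneg in \<open>auto simp: clamped_ratio_def renyi_integrand_def\<close>)

lemma clamped_ratio_powr_mult_p:
  assumes "0 < \<alpha>" "0 \<le> p" "0 \<le> q" "1 \<le> N"
  shows "clamped_ratio N p q powr \<alpha> * p \<le> renyi_integrand \<alpha> p q + N powr (- \<alpha>) * p"
proof (cases "0 < p")
  case True
  have "clamped_ratio N p q powr \<alpha> = max (min (q / p) N) (1 / N) powr \<alpha>"
    using True by (simp add: clamped_ratio_def)
  also have "\<dots> \<le> min (q / p) N powr \<alpha> + (1 / N) powr \<alpha>"
    using True assms by (intro powr_max_le_add) auto
  also have "\<dots> \<le> (q / p) powr \<alpha> + N powr (- \<alpha>)"
  proof -
    have "(1 / N) powr \<alpha> = N powr (- \<alpha>)"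
      using assms by (simp add: powr_divide powr_minus_divide)
    then show ?thesis
      using True assms by (auto intro!: add_mono powr_mono2)
  qed
  finally have "clamped_ratio N p q powr \<alpha> * p \<le> ((q / p) powr \<alpha> + N powr (- \<alpha>)) * p"
    using True by (intro mult_right_mono) auto
  then show ?thesis
    using True assms by (simp add: renyi_integrand_eq_ratio_powr distrib_right)
qed (use assms renyi_integrand_nonneg in auto)

section \<open>Exponential moments under a probability density\<close>

locale prob_density =
  fixes \<nu> :: "'a measure" and d :: "'a \<Rightarrow> real"
  assumes density_measurable [measurable]: "d \<in> borel_measurable \<nu>"
    and density_nonneg: "\<And>x. x \<in> space \<nu> \<Longrightarrow> 0 \<le> d x"
    and prob_space_density: "prob_space (density \<nu> d)"
begin

lemma nn_integral_density_eq_1: "(\<integral>\<^sup>+x. ennreal (d x) \<partial>\<nu>) = 1"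
proof -
  have "emeasure (density \<nu> d) (space \<nu>) = (\<integral>\<^sup>+x. ennreal (d x) * indicator (space \<nu>) x \<partial>\<nu>)"
    by (simp add: emeasure_density)
  also have "\<dots> = (\<integral>\<^sup>+x. ennreal (d x) \<partial>\<nu>)"
    by (rule nn_integral_cong) simp
  finally show ?thesis
    using prob_space.emeasure_space_1[OF prob_space_density] by simp
qed

lemma integrable_exp_density:
  assumes "f \<in> bounded_measurable \<nu>"
  shows "integrable (density \<nu> d) (\<lambda>x. exp (f x))"
proof -
  interpret prob_space "density \<nu> d" by (rule prob_space_density)
  obtain C where [measurable]: "f \<in> borel_measurable \<nu>" and "\<forall>x\<in>space \<nu>. \<bar>f x\<bar> \<le> C"
    using assms unfolding bounded_measurable_def by auto
  then show ?thesis
    by (intro integrable_const_bound[where B="exp C"]) (auto intro!: AE_I2 simp: abs_le_iff)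
qed

lemma integral_exp_density:
  assumes "f \<in> bounded_measurable \<nu>"
  shows "0 < (\<integral>x. exp (f x) \<partial>density \<nu> d)"
    and "ennreal (\<integral>x. exp (f x) \<partial>density \<nu> d) = (\<integral>\<^sup>+x. ennreal (exp (f x) * d x) \<partial>\<nu>)"
proof -
  interpret prob_space "density \<nu> d" by (rule prob_space_density)
  note int = integrable_exp_density[OF assms]
  obtain C where [measurable]: "f \<in> borel_measurable \<nu>" and "\<forall>x\<in>space \<nu>. \<bar>f x\<bar> \<le> C"
    using assms unfolding bounded_measurable_def by auto
  then have C: "- C \<le> f x" if "x \<in> space \<nu>" for x
    using that by (auto simp: abs_le_iff)
  have "0 < exp (- C)"
    by simp
  also have "exp (- C) = (\<integral>x. exp (- C) \<partial>density \<nu> d)"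
    using prob_space by simp
  also have "\<dots> \<le> (\<integral>x. exp (f x) \<partial>density \<nu> d)"
    using C by (intro integral_mono_AE int AE_I2) auto
  finally show "0 < (\<integral>x. exp (f x) \<partial>density \<nu> d)" .
  have "ennreal (\<integral>x. exp (f x) \<partial>density \<nu> d) = (\<integral>\<^sup>+x. ennreal (exp (f x)) \<partial>density \<nu> d)"
    using int by (simp add: nn_integral_eq_integral)
  also have "\<dots> = (\<integral>\<^sup>+x. ennreal (d x) * ennreal (exp (f x)) \<partial>\<nu>)"
    by (rule nn_integral_density) auto
  also have "\<dots> = (\<integral>\<^sup>+x. ennreal (exp (f x) * d x) \<partial>\<nu>)"
    by (rule nn_integral_cong) (simp add: density_nonneg ennreal_mult'' mult.commute)
  finally show "ennreal (\<integral>x. exp (f x) \<partial>density \<nu> d) = (\<integral>\<^sup>+x. ennreal (exp (f x) * d x) \<partial>\<nu>)" .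
qed

lemma integral_exp_density_ge:
  assumes "f \<in> bounded_measurable \<nu>" and "(\<integral>\<^sup>+x. ennreal (h x) \<partial>\<nu>) = ennreal H" "0 \<le> H"
    and "\<And>x. x \<in> space \<nu> \<Longrightarrow> h x \<le> exp (f x) * d x"
  shows "H \<le> (\<integral>x. exp (f x) \<partial>density \<nu> d)"
proof -
  have "ennreal H \<le> (\<integral>\<^sup>+x. ennreal (exp (f x) * d x) \<partial>\<nu>)"
    unfolding assms(2)[symmetric] using assms(4) by (intro nn_integral_mono ennreal_leI)
  also have "\<dots> = ennreal (\<integral>x. exp (f x) \<partial>density \<nu> d)"
    using integral_exp_density[OF assms(1)] by simp
  finally show ?thesis
    using integral_exp_density(1)[OF assms(1)] by (simp add: ennreal_le_iff)
qed

lemma integral_exp_density_le_add: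
  assumes "f \<in> bounded_measurable \<nu>" and [measurable]: "h \<in> borel_measurable \<nu>"
    and "\<And>x. x \<in> space \<nu> \<Longrightarrow> 0 \<le> h x"
    and "(\<integral>\<^sup>+x. ennreal (h x) \<partial>\<nu>) = ennreal H" "0 \<le> H" "0 \<le> c"
    and "\<And>x. x \<in> space \<nu> \<Longrightarrow> exp (f x) * d x \<le> h x + c * d x"
  shows "(\<integral>x. exp (f x) \<partial>density \<nu> d) \<le> H + c"
proof -
  have "ennreal (\<integral>x. exp (f x) \<partial>density \<nu> d) = (\<integral>\<^sup>+x. ennreal (exp (f x) * d x) \<partial>\<nu>)"
    using integral_exp_density[OF assms(1)] by simp
  also have "\<dots> \<le> (\<integral>\<^sup>+x. ennreal (h x) + ennreal c * ennreal (d x) \<partial>\<nu>)"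
  proof (rule nn_integral_mono)
    fix x assume x: "x \<in> space \<nu>"
    have "ennreal (exp (f x) * d x) \<le> ennreal (h x + c * d x)"
      using assms(7)[OF x] by (rule ennreal_leI)
    also have "\<dots> = ennreal (h x) + ennreal c * ennreal (d x)"
      using assms(3)[OF x] assms(6) density_nonneg[OF x] by (simp add: ennreal_mult)
    finally show "ennreal (exp (f x) * d x) \<le> ennreal (h x) + ennreal c * ennreal (d x)" .
  qed
  also have "\<dots> = (\<integral>\<^sup>+x. ennreal (h x) \<partial>\<nu>) + ennreal c * (\<integral>\<^sup>+x. ennreal (d x) \<partial>\<nu>)"
    by (subst nn_integral_add) (auto simp: nn_integral_cmult)
  also have "\<dots> = ennreal (H + c)"
    using assms(4-6) by (simp add: nn_integral_density_eq_1 ennreal_plus)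
  finally show ?thesis
    using assms(5,6) ennreal_le_iff by (metis add_nonneg_nonneg)
qed

end

section \<open>The variational formula\<close>

definition renyi_objective :: "'a measure \<Rightarrow> 'a measure \<Rightarrow> real \<Rightarrow> ('a \<Rightarrow> real) \<Rightarrow> real" where
  "renyi_objective P Q \<alpha> g =
     1 / (\<alpha> - 1) * ln (\<integral>x. exp ((\<alpha> - 1) * g x) \<partial>Q) - 1 / \<alpha> * ln (\<integral>x. exp (\<alpha> * g x) \<partial>P)"

lemma renyi_objective_reflect:
  "renyi_objective Q P (1 - \<alpha>) g = renyi_objective P Q \<alpha> (\<lambda>x. - g x)"
proof -
  have "1 / (1 - \<alpha>) = - (1 / (\<alpha> - 1))" "(1 - \<alpha> - 1) = - \<alpha>"
    by (simp_all add: minus_divide_right)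
  moreover have "(\<lambda>x. exp ((1 - \<alpha>) * g x)) = (\<lambda>x. exp ((\<alpha> - 1) * - g x))"
    by (simp add: algebra_simps)
  ultimately show ?thesis
    unfolding renyi_objective_def by simp
qed

lemma SUP_renyi_objective_reflect:
  "(SUP g\<in>bounded_measurable M. ereal (renyi_objective Q P (1 - \<alpha>) g))
    = (SUP g\<in>bounded_measurable M. ereal (renyi_objective P Q \<alpha> g))"
  by (simp add: renyi_objective_reflect bounded_measurable_uminus_image
      flip: image_image[where f="\<lambda>h. ereal (renyi_objective P Q \<alpha> h)" and g="\<lambda>g x. - g x"])

locale prob_density_pair = P: prob_density \<nu> p + Q: prob_density \<nu> q
  for \<nu> :: "'a measure" and p q :: "'a \<Rightarrow> real"
begin

lemma exp_renyi_objective: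
  assumes "g \<in> bounded_measurable \<nu>" "\<alpha> \<noteq> 0" "\<alpha> \<noteq> 1"
  shows "exp (\<alpha> * (\<alpha> - 1) * renyi_objective (density \<nu> p) (density \<nu> q) \<alpha> g)
    = (\<integral>x. exp ((\<alpha> - 1) * g x) \<partial>density \<nu> q) powr \<alpha> * (\<integral>x. exp (\<alpha> * g x) \<partial>density \<nu> p) powr (1 - \<alpha>)"
proof -
  define A where "A = (\<integral>x. exp ((\<alpha> - 1) * g x) \<partial>density \<nu> q)"
  define B where "B = (\<integral>x. exp (\<alpha> * g x) \<partial>density \<nu> p)"
  have "0 < A" "0 < B"
    unfolding A_def B_def using assms(1)
    by (auto intro!: P.integral_exp_density Q.integral_exp_density bounded_measurable_cmult)
  moreover have "\<alpha> * (\<alpha> - 1) * (1 / (\<alpha> - 1) * ln A - 1 / \<alpha> * ln B) = \<alpha> * ln A + (1 - \<alpha>) * ln B"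
    using assms(2,3) by (simp add: field_simps)
  ultimately show ?thesis
    unfolding renyi_objective_def A_def[symmetric] B_def[symmetric] by (simp add: powr_def exp_add)
qed

lemma AE_zero_if_absolutely_continuous:
  assumes "absolutely_continuous (density \<nu> p) (density \<nu> q)"
  shows "AE x in \<nu>. p x = 0 \<longrightarrow> q x = 0"
proof -
  define S where "S = {x \<in> space \<nu>. p x = 0}"
  have S: "S \<in> sets \<nu>"
    unfolding S_def by measurable
  then have "S \<in> null_sets (density \<nu> p)"
    by (subst null_sets_density_iff) (auto simp: S_def intro!: AE_I2)
  then have "S \<in> null_sets (density \<nu> q)"
    using assms unfolding absolutely_continuous_def by auto
  then have "AE x in \<nu>. x \<in> S \<longrightarrow> ennreal (q x) = 0"
    by (subst (asm) null_sets_density_iff) auto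
  then show ?thesis
    by (rule AE_mp) (auto intro!: AE_I2 simp: S_def dest: Q.density_nonneg)
qed

lemma renyi_integral_le_exp_renyi_objective:
  assumes "0 < \<alpha>" "\<alpha> < 1" and g: "g \<in> bounded_measurable \<nu>"
  shows "renyi_integral \<nu> p q \<alpha> \<le> ennreal (exp (\<alpha> * (\<alpha> - 1) * renyi_objective (density \<nu> p) (density \<nu> q) \<alpha> g))"
proof -
  define A where "A = (\<integral>x. exp ((\<alpha> - 1) * g x) \<partial>density \<nu> q)"
  define B where "B = (\<integral>x. exp (\<alpha> * g x) \<partial>density \<nu> p)"
  note A = Q.integral_exp_density[OF bounded_measurable_cmult[OF g], of "\<alpha> - 1", folded A_def]
  note B = P.integral_exp_density[OF bounded_measurable_cmult[OF g], of \<alpha>, folded B_def]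
  have [measurable]: "g \<in> borel_measurable \<nu>"
    using g by (simp add: bounded_measurable_def)
  have "renyi_integral \<nu> p q \<alpha> = (\<integral>\<^sup>+x. ennreal (renyi_integrand \<alpha> (p x) (q x)) \<partial>\<nu>)"
    by (rule renyi_integral_eq_nn_integral)
  also have "\<dots> \<le> (\<integral>\<^sup>+x. ennreal ((exp ((\<alpha> - 1) * g x) * q x) powr \<alpha> * (exp (\<alpha> * g x) * p x) powr (1 - \<alpha>)) \<partial>\<nu>)"
    using P.density_nonneg Q.density_nonneg
    by (intro nn_integral_mono ennreal_leI) (simp add: tilted_powr_product renyi_integrand_def)
  also have "\<dots> \<le> ennreal (A powr \<alpha> * B powr (1 - \<alpha>))"
    using assms(1,2) A B P.density_nonneg Q.density_nonneg
    by (intro nn_integral_Hoelder) auto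
  also have "A powr \<alpha> * B powr (1 - \<alpha>) = exp (\<alpha> * (\<alpha> - 1) * renyi_objective (density \<nu> p) (density \<nu> q) \<alpha> g)"
    unfolding A_def B_def using assms by (simp add: exp_renyi_objective)
  finally show ?thesis .
qed

lemma exp_renyi_objective_le_renyi_integral:
  assumes "1 < \<alpha>" and ac: "absolutely_continuous (density \<nu> p) (density \<nu> q)"
    and g: "g \<in> bounded_measurable \<nu>"
  shows "ennreal (exp (\<alpha> * (\<alpha> - 1) * renyi_objective (density \<nu> p) (density \<nu> q) \<alpha> g)) \<le> renyi_integral \<nu> p q \<alpha>"
proof (cases "renyi_integral \<nu> p q \<alpha>")
  case (real r)
  define A where "A = (\<integral>x. exp ((\<alpha> - 1) * g x) \<partial>density \<nu> q)"
  define B where "B = (\<integral>x. exp (\<alpha> * g x) \<partial>density \<nu> p)"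
  note A = Q.integral_exp_density[OF bounded_measurable_cmult[OF g], of "\<alpha> - 1", folded A_def]
  note B = P.integral_exp_density[OF bounded_measurable_cmult[OF g], of \<alpha>, folded B_def]
  have [measurable]: "g \<in> borel_measurable \<nu>"
    using g by (simp add: bounded_measurable_def)
  \<comment> \<open>\<open>Q \<lless> P\<close> is what makes this factorisation hold almost everywhere\<close>
  have "ennreal A = (\<integral>\<^sup>+x. ennreal (renyi_integrand \<alpha> (p x) (q x) powr (1 / \<alpha>) * (exp (\<alpha> * g x) * p x) powr (1 - 1 / \<alpha>)) \<partial>\<nu>)"
    unfolding A(2)
  proof (rule nn_integral_cong_AE)
    show "AE x in \<nu>. ennreal (exp ((\<alpha> - 1) * g x) * q x)
      = ennreal (renyi_integrand \<alpha> (p x) (q x) powr (1 / \<alpha>) * (exp (\<alpha> * g x) * p x) powr (1 - 1 / \<alpha>))"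
      using AE_zero_if_absolutely_continuous[OF ac]
    proof (rule AE_mp, intro AE_I2 impI)
      fix x assume "x \<in> space \<nu>" "p x = 0 \<longrightarrow> q x = 0"
      then show "ennreal (exp ((\<alpha> - 1) * g x) * q x)
        = ennreal (renyi_integrand \<alpha> (p x) (q x) powr (1 / \<alpha>) * (exp (\<alpha> * g x) * p x) powr (1 - 1 / \<alpha>))"
        using P.density_nonneg[of x] Q.density_nonneg[of x] assms(1)
        by (cases "0 < p x") (simp_all add: renyi_integrand_powr_tilted)
    qed
  qed
  also have "\<dots> \<le> ennreal (r powr (1 / \<alpha>) * B powr (1 - 1 / \<alpha>))"
    using assms(1) real B P.density_nonneg
    by (intro nn_integral_Hoelder) (auto simp: renyi_integrand_nonneg simp flip: renyi_integral_eq_nn_integral)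
  finally have "A \<le> r powr (1 / \<alpha>) * B powr (1 - 1 / \<alpha>)"
    using real B by (simp add: ennreal_le_iff)
  then have "A powr \<alpha> * B powr (1 - \<alpha>) \<le> r"
    using assms(1) A(1) B(1) real by (intro powr_mult_le_if_le_root_mult) auto
  then show ?thesis
    unfolding A_def B_def using exp_renyi_objective[OF g] assms(1) real by simp
qed simp_all

lemma renyi_objective_ge_if_exp_le:
  assumes "g \<in> bounded_measurable \<nu>" "\<alpha> * (\<alpha> - 1) < 0"
    and "(\<integral>x. exp ((\<alpha> - 1) * g x) \<partial>density \<nu> q) powr \<alpha> * (\<integral>x. exp (\<alpha> * g x) \<partial>density \<nu> p) powr (1 - \<alpha>)
      \<le> exp (\<alpha> * (\<alpha> - 1) * y)"
  shows "y \<le> renyi_objective (density \<nu> p) (density \<nu> q) \<alpha> g"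
proof -
  have "\<alpha> \<noteq> 0" "\<alpha> \<noteq> 1"
    using assms(2) by auto
  then have "exp (\<alpha> * (\<alpha> - 1) * renyi_objective (density \<nu> p) (density \<nu> q) \<alpha> g) \<le> exp (\<alpha> * (\<alpha> - 1) * y)"
    using assms(3) exp_renyi_objective[OF assms(1)] by simp
  then have "\<alpha> * (\<alpha> - 1) * renyi_objective (density \<nu> p) (density \<nu> q) \<alpha> g \<le> \<alpha> * (\<alpha> - 1) * y"
    by simp
  then show ?thesis
    using assms(2) by (simp add: mult_le_cancel_left_neg)
qed

lemma renyi_objective_ge_if_exp_ge:
  assumes "g \<in> bounded_measurable \<nu>" "0 < \<alpha> * (\<alpha> - 1)"
    and "exp (\<alpha> * (\<alpha> - 1) * y)
      \<le> (\<integral>x. exp ((\<alpha> - 1) * g x) \<partial>density \<nu> q) powr \<alpha> * (\<integral>x. exp (\<alpha> * g x) \<partial>density \<nu> p) powr (1 - \<alpha>)"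
  shows "y \<le> renyi_objective (density \<nu> p) (density \<nu> q) \<alpha> g"
proof -
  have "\<alpha> \<noteq> 0" "\<alpha> \<noteq> 1"
    using assms(2) by auto
  then have "exp (\<alpha> * (\<alpha> - 1) * y) \<le> exp (\<alpha> * (\<alpha> - 1) * renyi_objective (density \<nu> p) (density \<nu> q) \<alpha> g)"
    using assms(3) exp_renyi_objective[OF assms(1)] by simp
  then show ?thesis
    using assms(2) by (simp add: mult_le_cancel_left_pos)
qed

lemma clamped_log_ratio_exp_moments:
  assumes "0 < \<alpha>" "\<alpha> < 1" "1 \<le> N" and r: "renyi_integral \<nu> p q \<alpha> = ennreal r" "0 \<le> r"
  defines "g \<equiv> \<lambda>x. ln (clamped_ratio N (p x) (q x))"
  shows "g \<in> bounded_measurable \<nu>"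
    and "(\<integral>x. exp ((\<alpha> - 1) * g x) \<partial>density \<nu> q) \<le> r + N powr (\<alpha> - 1)"
    and "(\<integral>x. exp (\<alpha> * g x) \<partial>density \<nu> p) \<le> r + N powr (- \<alpha>)"
proof -
  define t where "t x = clamped_ratio N (p x) (q x)" for x
  have t: "1 / N \<le> t x" "t x \<le> N" "0 < t x" for x
    using clamped_ratio_bounds[OF assms(3)] assms(3) unfolding t_def by (auto intro: less_le_trans[of 0 "1 / N"])
  have "t \<in> borel_measurable \<nu>"
    unfolding t_def clamped_ratio_def by measurable
  then show g: "g \<in> bounded_measurable \<nu>"
    unfolding g_def t_def[symmetric] using t assms(3) by (intro bounded_measurable_ln[of _ _ "1 / N" N]) auto
  have exp_g: "exp (c * g x) = t x powr c" for c x
    using t(3)[of x] by (simp add: g_def t_def powr_def)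
  show "(\<integral>x. exp ((\<alpha> - 1) * g x) \<partial>density \<nu> q) \<le> r + N powr (\<alpha> - 1)"
    using assms(1-3) r P.density_nonneg Q.density_nonneg
    by (intro Q.integral_exp_density_le_add[of _ "\<lambda>x. renyi_integrand \<alpha> (p x) (q x)"] bounded_measurable_cmult[OF g])
       (auto simp: exp_g t_def renyi_integrand_nonneg clamped_ratio_powr_mult_q simp flip: renyi_integral_eq_nn_integral)
  show "(\<integral>x. exp (\<alpha> * g x) \<partial>density \<nu> p) \<le> r + N powr (- \<alpha>)"
    using assms(1,3) r P.density_nonneg Q.density_nonneg
    by (intro P.integral_exp_density_le_add[of _ "\<lambda>x. renyi_integrand \<alpha> (p x) (q x)"] bounded_measurable_cmult[OF g])
       (auto simp: exp_g t_def renyi_integrand_nonneg clamped_ratio_powr_mult_p simp flip: renyi_integral_eq_nn_integral)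
qed

lemma ex_renyi_objective_ge_lt1:
  assumes "0 < \<alpha>" "\<alpha> < 1" and less: "renyi_integral \<nu> p q \<alpha> < ennreal (exp (\<alpha> * (\<alpha> - 1) * y))"
  shows "\<exists>g\<in>bounded_measurable \<nu>. y \<le> renyi_objective (density \<nu> p) (density \<nu> q) \<alpha> g"
proof -
  define Y where "Y = \<alpha> * (\<alpha> - 1) * y"
  obtain r where r: "renyi_integral \<nu> p q \<alpha> = ennreal r" "0 \<le> r" "r < exp Y"
    using less unfolding Y_def by (cases "renyi_integral \<nu> p q \<alpha>") (auto simp: ennreal_less_iff)
  obtain N where N: "r + N powr (\<alpha> - 1) < exp Y" "r + N powr (- \<alpha>) < exp Y" "1 \<le> N"
    using exists_large_powr_lt[OF assms(1,2) r(3)] by auto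
  define g where "g x = ln (clamped_ratio N (p x) (q x))" for x
  note g = clamped_log_ratio_exp_moments[OF assms(1,2) N(3) r(1,2), folded g_def]
  have "(\<integral>x. exp ((\<alpha> - 1) * g x) \<partial>density \<nu> q) powr \<alpha> * (\<integral>x. exp (\<alpha> * g x) \<partial>density \<nu> p) powr (1 - \<alpha>)
      \<le> exp Y powr \<alpha> * exp Y powr (1 - \<alpha>)"
    using g N(1,2) assms(1,2)
    by (intro mult_mono powr_mono2) (auto intro: P.integral_exp_density Q.integral_exp_density bounded_measurable_cmult)
  also have "\<dots> = exp Y"
    by (simp add: powr_add[symmetric])
  finally have "y \<le> renyi_objective (density \<nu> p) (density \<nu> q) \<alpha> g"
    using assms(1,2) by (intro renyi_objective_ge_if_exp_le[OF g(1)]) (auto simp: Y_def mult_pos_neg)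
  with g(1) show ?thesis by blast
qed

lemma renyi_integral_eq_SUP_truncated:
  assumes "0 < \<alpha>"
  shows "renyi_integral \<nu> p q \<alpha> = (SUP n. \<integral>\<^sup>+x. ennreal (truncated_ratio (real n) (p x) (q x) powr \<alpha> * p x) \<partial>\<nu>)"
proof -
  have "renyi_integral \<nu> p q \<alpha> = (\<integral>\<^sup>+x. (SUP n. ennreal (truncated_ratio (real n) (p x) (q x) powr \<alpha> * p x)) \<partial>\<nu>)"
    unfolding renyi_integral_eq_nn_integral using assms P.density_nonneg Q.density_nonneg
    by (intro nn_integral_cong) (simp add: SUP_truncated_ratio_powr)
  also have "\<dots> = (SUP n. \<integral>\<^sup>+x. ennreal (truncated_ratio (real n) (p x) (q x) powr \<alpha> * p x) \<partial>\<nu>)"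
  proof (rule nn_integral_monotone_convergence_SUP)
    show "incseq (\<lambda>n x. ennreal (truncated_ratio (real n) (p x) (q x) powr \<alpha> * p x))"
      using incseq_truncated_ratio_powr[OF assms] by (auto simp: incseq_def le_fun_def intro!: ennreal_leI)
  qed (simp add: truncated_ratio_def)
  finally show ?thesis .
qed

lemma truncated_log_ratio_exp_moments:
  assumes "1 < \<alpha>" "0 \<le> N" "0 < \<delta>" "0 \<le> J"
    and J: "(\<integral>\<^sup>+x. ennreal (truncated_ratio N (p x) (q x) powr \<alpha> * p x) \<partial>\<nu>) = ennreal J"
  defines "g \<equiv> \<lambda>x. ln (max (truncated_ratio N (p x) (q x)) \<delta>)"
  shows "g \<in> bounded_measurable \<nu>"
    and "J \<le> (\<integral>x. exp ((\<alpha> - 1) * g x) \<partial>density \<nu> q)"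
    and "(\<integral>x. exp (\<alpha> * g x) \<partial>density \<nu> p) \<le> J + \<delta> powr \<alpha>"
proof -
  define s where "s x = truncated_ratio N (p x) (q x)" for x
  define t where "t x = max (s x) \<delta>" for x
  have s: "0 \<le> s x \<and> s x \<le> N" for x
    using truncated_ratio_bounds[OF assms(2)] by (simp add: s_def)
  have t: "\<delta> \<le> t x" "t x \<le> max \<delta> N" "0 < t x" for x
    using s[of x] assms(3) by (auto simp: t_def)
  have [measurable]: "s \<in> borel_measurable \<nu>"
    unfolding s_def truncated_ratio_def by measurable
  then show g: "g \<in> bounded_measurable \<nu>"
    unfolding g_def s_def[symmetric] t_def[symmetric] using t assms(3)
    by (intro bounded_measurable_ln[of _ _ \<delta> "max \<delta> N"]) (auto simp: t_def)
  have exp_g: "exp (c * g x) = t x powr c" for c x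
    using t(3)[of x] by (simp add: g_def s_def t_def powr_def)
  have J': "(\<integral>\<^sup>+x. ennreal (s x powr \<alpha> * p x) \<partial>\<nu>) = ennreal J"
    using J by (simp add: s_def)
  have "s x powr \<alpha> * p x \<le> exp ((\<alpha> - 1) * g x) * q x" if "x \<in> space \<nu>" for x
    using assms(1,2) Q.density_nonneg[OF that]
    by (simp add: exp_g s_def t_def truncated_ratio_powr_mult_le)
  then show "J \<le> (\<integral>x. exp ((\<alpha> - 1) * g x) \<partial>density \<nu> q)"
    using assms(4) by (intro Q.integral_exp_density_ge[OF bounded_measurable_cmult[OF g] J']) auto
  have "exp (\<alpha> * g x) * p x \<le> s x powr \<alpha> * p x + \<delta> powr \<alpha> * p x" if x: "x \<in> space \<nu>" for x
  proof -
    have "t x powr \<alpha> * p x \<le> (s x powr \<alpha> + \<delta> powr \<alpha>) * p x"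
      unfolding t_def using s[of x] assms(1,3) P.density_nonneg[OF x]
      by (intro mult_right_mono powr_max_le_add) auto
    then show ?thesis
      by (simp add: exp_g distrib_right)
  qed
  then show "(\<integral>x. exp (\<alpha> * g x) \<partial>density \<nu> p) \<le> J + \<delta> powr \<alpha>"
    using assms(4) s P.density_nonneg
    by (intro P.integral_exp_density_le_add[OF bounded_measurable_cmult[OF g] _ _ J']) auto
qed

lemma ex_renyi_objective_ge_truncated:
  assumes "1 < \<alpha>" "0 \<le> N"
    and J: "(\<integral>\<^sup>+x. ennreal (truncated_ratio N (p x) (q x) powr \<alpha> * p x) \<partial>\<nu>) = ennreal J"
    and less: "exp (\<alpha> * (\<alpha> - 1) * y) < J"
  shows "\<exists>g\<in>bounded_measurable \<nu>. y \<le> renyi_objective (density \<nu> p) (density \<nu> q) \<alpha> g"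
proof -
  have J0: "0 < J"
    using less by (smt (verit) exp_gt_zero)
  obtain e where e: "exp (\<alpha> * (\<alpha> - 1) * y) < J powr \<alpha> * (J + e) powr (1 - \<alpha>)" "0 < e"
    using exists_pos_powr_product_gt[OF J0 less] by auto
  define \<delta> where "\<delta> = e powr (1 / \<alpha>)"
  have \<delta>: "0 < \<delta>" "\<delta> powr \<alpha> = e"
    using e(2) assms(1) by (simp_all add: \<delta>_def powr_powr)
  define g where "g x = ln (max (truncated_ratio N (p x) (q x)) \<delta>)" for x
  note g = truncated_log_ratio_exp_moments[OF assms(1,2) \<delta>(1) less_imp_le[OF J0] J, folded g_def, unfolded \<delta>(2)]
  have B: "(J + e) powr (1 - \<alpha>) \<le> (\<integral>x. exp (\<alpha> * g x) \<partial>density \<nu> p) powr (1 - \<alpha>)"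
    using g assms(1) by (intro powr_mono2') (auto intro: P.integral_exp_density bounded_measurable_cmult)
  have "J powr \<alpha> * (J + e) powr (1 - \<alpha>)
      \<le> (\<integral>x. exp ((\<alpha> - 1) * g x) \<partial>density \<nu> q) powr \<alpha> * (\<integral>x. exp (\<alpha> * g x) \<partial>density \<nu> p) powr (1 - \<alpha>)"
    using g J0 assms(1) by (intro mult_mono[OF _ B] powr_mono2) auto
  with e(1) have "y \<le> renyi_objective (density \<nu> p) (density \<nu> q) \<alpha> g"
    using assms(1) by (intro renyi_objective_ge_if_exp_ge[OF g(1)]) auto
  with g(1) show ?thesis by blast
qed

lemma ex_renyi_objective_ge_gt1:
  assumes "1 < \<alpha>" and less: "ennreal (exp (\<alpha> * (\<alpha> - 1) * y)) < renyi_integral \<nu> p q \<alpha>"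
  shows "\<exists>g\<in>bounded_measurable \<nu>. y \<le> renyi_objective (density \<nu> p) (density \<nu> q) \<alpha> g"
proof -
  define J where "J n = (\<integral>\<^sup>+x. ennreal (truncated_ratio (real n) (p x) (q x) powr \<alpha> * p x) \<partial>\<nu>)" for n
  have "ennreal (exp (\<alpha> * (\<alpha> - 1) * y)) < (SUP n. J n)"
    using less renyi_integral_eq_SUP_truncated[of \<alpha>] assms(1) by (simp add: J_def)
  then obtain n where n: "ennreal (exp (\<alpha> * (\<alpha> - 1) * y)) < J n"
    by (auto simp: less_SUP_iff)
  have "J n \<le> (\<integral>\<^sup>+x. ennreal (real n powr \<alpha>) * ennreal (p x) \<partial>\<nu>)"
    unfolding J_def using assms(1) P.density_nonneg truncated_ratio_bounds[of "real n"]
    by (intro nn_integral_mono) (auto simp: ennreal_mult[symmetric] intro!: ennreal_leI mult_right_mono powr_mono2)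
  also have "\<dots> = ennreal (real n powr \<alpha>)"
    by (simp add: nn_integral_cmult P.nn_integral_density_eq_1)
  finally obtain Jr where "J n = ennreal Jr" "0 \<le> Jr"
    by (cases "J n") (auto simp: top_unique)
  with n show ?thesis
    using assms(1) by (intro ex_renyi_objective_ge_truncated[of _ "real n" Jr]) (auto simp: J_def ennreal_less_iff)
qed

lemma ex_renyi_objective_ge_not_absolutely_continuous:
  assumes "1 < \<alpha>" and nac: "\<not> absolutely_continuous (density \<nu> p) (density \<nu> q)"
  shows "\<exists>g\<in>bounded_measurable \<nu>. y \<le> renyi_objective (density \<nu> p) (density \<nu> q) \<alpha> g"
proof -
  interpret Q': prob_space "density \<nu> q" by (rule Q.prob_space_density)
  obtain S where S: "S \<in> null_sets (density \<nu> p)" "S \<notin> null_sets (density \<nu> q)"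
    using nac unfolding absolutely_continuous_def by auto
  have [measurable]: "S \<in> sets \<nu>"
    using S(1) by (auto dest: null_setsD2)
  define qS where "qS = measure (density \<nu> q) S"
  have qS: "0 < qS"
    using S(2) by (simp add: qS_def Q'.emeasure_eq_measure null_sets_def zero_less_measure_iff)
  define n where "n = y - ln qS / (\<alpha> - 1)"
  define g where "g x = n * indicator S x" for x
  have g: "g \<in> bounded_measurable \<nu>"
    unfolding bounded_measurable_def g_def by (auto intro!: exI[of _ "\<bar>n\<bar>"] simp: indicator_def)
  have "exp ((\<alpha> - 1) * n) * qS = (\<integral>x. exp ((\<alpha> - 1) * n) * indicator S x \<partial>density \<nu> q)"
    by (simp add: qS_def)
  also have "\<dots> \<le> (\<integral>x. exp ((\<alpha> - 1) * g x) \<partial>density \<nu> q)"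
    using assms(1)
    by (intro integral_mono Q.integrable_exp_density bounded_measurable_cmult[OF g]
        integrable_mult_right integrable_real_indicator) (auto simp: g_def indicator_def Q'.emeasure_eq_measure)
  finally have A: "exp ((\<alpha> - 1) * n) * qS \<le> (\<integral>x. exp ((\<alpha> - 1) * g x) \<partial>density \<nu> q)" .
  have "(\<integral>x. exp (\<alpha> * g x) \<partial>density \<nu> p) = (\<integral>x. 1 \<partial>density \<nu> p)"
  proof (rule integral_cong_AE)
    show "AE x in density \<nu> p. exp (\<alpha> * g x) = 1"
      using AE_not_in[OF S(1)] by (rule AE_mp) (auto simp: g_def)
  qed (auto simp: g_def)
  also have "\<dots> = 1"
    using prob_space.prob_space[OF P.prob_space_density] by simp
  finally have B: "(\<integral>x. exp (\<alpha> * g x) \<partial>density \<nu> p) = 1" .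
  have "ln (exp ((\<alpha> - 1) * n) * qS) = (\<alpha> - 1) * y"
    using qS assms(1) by (simp add: ln_mult n_def right_diff_distrib)
  then have "y = 1 / (\<alpha> - 1) * ln (exp ((\<alpha> - 1) * n) * qS)"
    using assms(1) by simp
  also have "\<dots> \<le> renyi_objective (density \<nu> p) (density \<nu> q) \<alpha> g"
    unfolding renyi_objective_def B using A qS assms(1) by (simp add: divide_right_mono ln_mono)
  finally show ?thesis
    using g by blast
qed

lemma renyi_pos_eq_SUP_objective_lt1:
  assumes "0 < \<alpha>" "\<alpha> < 1"
  shows "renyi_pos \<nu> p q \<alpha>
    = (SUP g\<in>bounded_measurable \<nu>. ereal (renyi_objective (density \<nu> p) (density \<nu> q) \<alpha> g))"
proof -
  have c: "\<alpha> * (\<alpha> - 1) < 0"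
    using assms by (simp add: mult_pos_neg)
  have "ereal (1 / (\<alpha> * (\<alpha> - 1))) * ennreal_ln (renyi_integral \<nu> p q \<alpha>)
    = (SUP g\<in>bounded_measurable \<nu>. ereal (renyi_objective (density \<nu> p) (density \<nu> q) \<alpha> g))"
  proof (rule antisym)
    show "ereal (1 / (\<alpha> * (\<alpha> - 1))) * ennreal_ln (renyi_integral \<nu> p q \<alpha>)
      \<le> (SUP g\<in>bounded_measurable \<nu>. ereal (renyi_objective (density \<nu> p) (density \<nu> q) \<alpha> g))"
      using assms by (intro ereal_le_SUP_approx ex_renyi_objective_ge_lt1)
        (auto simp: ereal_le_ennreal_ln_iff_neg(2)[OF c])
    show "(SUP g\<in>bounded_measurable \<nu>. ereal (renyi_objective (density \<nu> p) (density \<nu> q) \<alpha> g))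
      \<le> ereal (1 / (\<alpha> * (\<alpha> - 1))) * ennreal_ln (renyi_integral \<nu> p q \<alpha>)"
      using assms by (intro SUP_least)
        (simp add: ereal_le_ennreal_ln_iff_neg(1)[OF c] renyi_integral_le_exp_renyi_objective)
  qed
  then show ?thesis
    using assms by (simp add: renyi_pos_def)
qed

lemma renyi_pos_eq_SUP_objective_gt1:
  assumes "1 < \<alpha>"
  shows "renyi_pos \<nu> p q \<alpha>
    = (SUP g\<in>bounded_measurable \<nu>. ereal (renyi_objective (density \<nu> p) (density \<nu> q) \<alpha> g))"
proof (cases "absolutely_continuous (density \<nu> p) (density \<nu> q)")
  case True
  have c: "0 < \<alpha> * (\<alpha> - 1)"
    using assms by simp
  have "ereal (1 / (\<alpha> * (\<alpha> - 1))) * ennreal_ln (renyi_integral \<nu> p q \<alpha>)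
    = (SUP g\<in>bounded_measurable \<nu>. ereal (renyi_objective (density \<nu> p) (density \<nu> q) \<alpha> g))"
  proof (rule antisym)
    show "ereal (1 / (\<alpha> * (\<alpha> - 1))) * ennreal_ln (renyi_integral \<nu> p q \<alpha>)
      \<le> (SUP g\<in>bounded_measurable \<nu>. ereal (renyi_objective (density \<nu> p) (density \<nu> q) \<alpha> g))"
      using assms by (intro ereal_le_SUP_approx ex_renyi_objective_ge_gt1)
        (auto simp: ereal_le_ennreal_ln_iff_pos(2)[OF c])
    show "(SUP g\<in>bounded_measurable \<nu>. ereal (renyi_objective (density \<nu> p) (density \<nu> q) \<alpha> g))
      \<le> ereal (1 / (\<alpha> * (\<alpha> - 1))) * ennreal_ln (renyi_integral \<nu> p q \<alpha>)"
      using assms True by (intro SUP_least)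
        (simp add: ereal_le_ennreal_ln_iff_pos(1)[OF c] exp_renyi_objective_le_renyi_integral)
  qed
  then show ?thesis
    using True by (simp add: renyi_pos_def)
next
  case False
  then have "\<infinity> \<le> (SUP g\<in>bounded_measurable \<nu>. ereal (renyi_objective (density \<nu> p) (density \<nu> q) \<alpha> g))"
    using assms by (intro ereal_le_SUP_approx ex_renyi_objective_ge_not_absolutely_continuous) auto
  then show ?thesis
    using assms False by (simp add: renyi_pos_def top_unique)
qed

end

theorem mainTheorem9:
  fixes \<nu> :: "'a measure" and p q :: "'a \<Rightarrow> real" and P Q :: "'a measure" and \<alpha> :: real
  assumes "sigma_finite_measure \<nu>"
    and "p \<in> borel_measurable \<nu>" and "q \<in> borel_measurable \<nu>"
    and "\<And>x. x \<in> space \<nu> \<Longrightarrow> p x \<ge> 0" and "\<And>x. x \<in> space \<nu> \<Longrightarrow> q x \<ge> 0"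
    and "P = density \<nu> p" and "Q = density \<nu> q"
    and "prob_space P" and "prob_space Q"
    and "\<alpha> \<noteq> 0" and "\<alpha> \<noteq> 1"
  shows "renyi_div \<nu> p q \<alpha> =
    (SUP g\<in>bounded_measurable P.
       ereal (1 / (\<alpha> - 1) * ln (\<integral>x. exp ((\<alpha> - 1) * g x) \<partial>Q)
              - 1 / \<alpha> * ln (\<integral>x. exp (\<alpha> * g x) \<partial>P)))"
proof -
  have "prob_density \<nu> p" "prob_density \<nu> q"
    using assms(2-9) by (simp_all add: prob_density_def)
  then interpret pq: prob_density_pair \<nu> p q + qp: prob_density_pair \<nu> q p
    by (simp_all add: prob_density_pair_def)
  have "renyi_div \<nu> p q \<alpha> = (SUP g\<in>bounded_measurable \<nu>. ereal (renyi_objective P Q \<alpha> g))"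
  proof (cases "\<alpha> < 0")
    case True
    then have "renyi_div \<nu> p q \<alpha> = (SUP g\<in>bounded_measurable \<nu>. ereal (renyi_objective Q P (1 - \<alpha>) g))"
      using qp.renyi_pos_eq_SUP_objective_gt1[of "1 - \<alpha>"] assms(6,7) by (simp add: renyi_div_def)
    then show ?thesis
      by (simp add: SUP_renyi_objective_reflect)
  next
    case False
    then show ?thesis
      using pq.renyi_pos_eq_SUP_objective_lt1[of \<alpha>] pq.renyi_pos_eq_SUP_objective_gt1[of \<alpha>] assms(6,7,10,11)
      by (cases "\<alpha> < 1") (simp_all add: renyi_div_def)
  qed
  then show ?thesis
    using assms(6) by (simp add: renyi_objective_def)
qed

end
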